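(* There exist absolute constants $c_*>0$, $K>0$ and $p_0$ such that for every prime $p\geqslant p_0$, the number $T(p)$ of ordered triples $(A,B,C)$ of subsets of $\mathbb{F}_p$ such that $x+y\neq z$ for all $x\in A$, $y\in B$, $z\in C$ satisfies $$|T(p)-3\cdot 4^p|\leqslant K(4-c_* )^p .$$
   Context: $\mathbb{F}_p$ is the field with $p$ elements, viewed as an additive group. The subsets $A,B,C$ may be empty. *)

theory Defs
  imports Complex_Main "HOL-Computational_Algebra.Primes"
begin

definition T :: "nat \<Rightarrow> nat" where
  "T p = card {(A, B, C). A \<subseteq> {0..<p} \<and> B \<subseteq> {0..<p} \<and> C \<subseteq> {0..<p} \<and>
                 (\<forall>x\<in>A. \<forall>y\<in>B. \<forall>z\<in>C. (x + y) mod p \<noteq> z)}"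

end

(*
  Triples with an empty component are counted exactly: there are 3 * 4^p - 3 * 2^p + 1 of them.
  Among the others, at most p^2 * 2^p have |A| = |B| = 1, and up to swapping A and B the rest
  contain two points a /= a' in A; fix also b in B and c in C. Read F_p along progressions with
  difference d = a' - a, from base points for A, B and C chosen so that the exclusions
  a + y, a' + y, x + b not in C and x + y /= c only relate the positions +-j and +-(j + 1).
  Recording the memberships at +-j for j = 0, ..., (p - 1) / 2 embeds the triple injectively into
  a walk of length (p + 1) / 2 in a graph on 64 states, and a weight vector contracted by the
  factor 31/2 under the transfer operator bounds the number of walks by O((31/2)^(p/2)),
  which is O((4 - 1/32)^p).
*)

theory Submission
  imports Defs "HOL-Number_Theory.Cong" "HOL-Real_Asymp.Real_Asymp"
begin

section \<open>Weighted counting of chains\<close>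

lemma sum_UNIV_bool: "(\<Sum>x\<in>UNIV. f x) = f False + f True"
  by (simp add: UNIV_bool)

lemma sum_UNIV_prod: "(\<Sum>x\<in>UNIV. f x) = (\<Sum>a\<in>UNIV. \<Sum>b\<in>UNIV. f (a, b))"
  by (simp add: sum.cartesian_product UNIV_Times_UNIV[symmetric] del: UNIV_Times_UNIV)

lemma sum_Collect_finite_UNIV: "(\<Sum>x | P x. f x) = (\<Sum>x\<in>UNIV. if P x then f x else 0)"
  for f :: "'a::finite \<Rightarrow> 'b::comm_monoid_add"
  using sum.inter_filter[of "UNIV :: 'a set" f P] by simp

lemma successively_upt: "(\<And>i. R i (Suc i)) \<Longrightarrow> successively R [m..<n]"
proof (induction n)
  case (Suc n)
  show ?case
  proof (cases "m < n")
    case True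
    then have "R (n - 1) n"
      using Suc.prems[of "n - 1"] by simp
    with True Suc show ?thesis
      by (simp add: successively_append_iff)
  qed (simp add: upt_Suc)
qed simp

definition chains :: "('a \<Rightarrow> bool) \<Rightarrow> ('a \<Rightarrow> 'a \<Rightarrow> bool) \<Rightarrow> nat \<Rightarrow> 'a list set" where
  "chains P R n = {xs. length xs = n \<and> list_all P xs \<and> successively R xs}"

lemma finite_chains: "finite (chains P R n)" for P :: "'a::finite \<Rightarrow> bool"
  by (rule finite_subset[OF _ finite_lists_length_eq[of "UNIV :: 'a set" n]]) (auto simp: chains_def)

lemma chains_Suc_0: "chains P R (Suc 0) = (\<lambda>x. [x]) ` {x. P x}"
  by (auto simp: chains_def length_Suc_conv)

lemma chains_Suc_Suc:
  "chains P R (Suc (Suc n)) =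
     (\<lambda>(ys, x). x # ys) ` (SIGMA ys:chains P R (Suc n). {x. P x \<and> R x (hd ys)})"
  by (fastforce simp: chains_def length_Suc_conv successively_Cons)

lemma sum_hd_chains_le:
  fixes w :: "'a::finite \<Rightarrow> real"
  assumes contraction: "\<And>y. (\<Sum>x | P x \<and> R x y. w x) \<le> r * w y" and "0 \<le> r"
  shows "(\<Sum>xs\<in>chains P R (Suc n). w (hd xs)) \<le> (\<Sum>x | P x. w x) * r ^ n"
proof (induction n)
  case 0
  show ?case by (simp add: chains_Suc_0 sum.reindex inj_on_def)
next
  case (Suc n)
  have "(\<Sum>xs\<in>chains P R (Suc (Suc n)). w (hd xs))
      = (\<Sum>ys\<in>chains P R (Suc n). \<Sum>x | P x \<and> R x (hd ys). w x)"
    unfolding chains_Suc_Suc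
    by (subst sum.reindex) (auto simp: inj_on_def case_prod_unfold sum.Sigma finite_chains)
  also have "\<dots> \<le> (\<Sum>ys\<in>chains P R (Suc n). r * w (hd ys))"
    by (intro sum_mono contraction)
  also have "\<dots> \<le> r * ((\<Sum>x | P x. w x) * r ^ n)"
    using Suc.IH \<open>0 \<le> r\<close> by (simp add: sum_distrib_left[symmetric] mult_left_mono)
  finally show ?case by (simp add: algebra_simps)
qed

lemma card_chains_le:
  fixes w :: "'a::finite \<Rightarrow> real"
  assumes "\<And>y. (\<Sum>x | P x \<and> R x y. w x) \<le> r * w y" "0 \<le> r" and "\<And>x. m \<le> w x" "0 < m"
  shows "real (card (chains P R (Suc n))) \<le> (\<Sum>x | P x. w x) / m * r ^ n"
proof -
  have "m * real (card (chains P R (Suc n))) \<le> (\<Sum>xs\<in>chains P R (Suc n). w (hd xs))"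
    using sum_mono[of "chains P R (Suc n)" "\<lambda>_. m" "\<lambda>xs. w (hd xs)"] assms(3) by (simp add: mult.commute)
  also have "\<dots> \<le> (\<Sum>x | P x. w x) * r ^ n"
    by (rule sum_hd_chains_le[OF assms(1,2)])
  finally show ?thesis using \<open>0 < m\<close> by (simp add: field_simps)
qed

(* A layer records the membership of the points at positions j and -j of the progressions through
   A, B and C, in the order (A at j, B at j, C at j, A at -j, B at -j, C at -j). *)
type_synonym layer = "bool \<times> bool \<times> bool \<times> bool \<times> bool \<times> bool"

fun legal_layer :: "layer \<Rightarrow> bool" where
  "legal_layer (a, b, c, a', b', c') \<longleftrightarrow>
     \<not> (c \<and> b) \<and> \<not> (c \<and> a) \<and> \<not> (a \<and> b') \<and> \<not> (c' \<and> b') \<and> \<not> (c' \<and> a') \<and> \<not> (a' \<and> b)"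

fun legal_step :: "layer \<Rightarrow> layer \<Rightarrow> bool" where
  "legal_step (a, b, c, a', b', c') (a\<^sub>1, b\<^sub>1, c\<^sub>1, a\<^sub>1', b\<^sub>1', c\<^sub>1') \<longleftrightarrow> \<not> (c\<^sub>1 \<and> b) \<and> \<not> (c' \<and> b\<^sub>1')"

(* Depends only on the coordinates of the later layer that legal_step constrains; the values are
   tuned so that the contraction factor 31/2 is below 4^2. *)
fun layer_weight :: "layer \<Rightarrow> real" where
  "layer_weight (a, b, c, a', b', c') = (if c then if b' then 51 else 70 else if b' then 70 else 100)"

lemma layer_weight_contraction:
  "(\<Sum>x | legal_layer x \<and> legal_step x y. layer_weight x) \<le> 31/2 * layer_weight y"
proof -
  obtain a b c a' b' c' where y: "y = (a, b, c, a', b', c')" by (cases y)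
  show ?thesis unfolding y
    by (cases c; cases b') (simp_all add: sum_Collect_finite_UNIV sum_UNIV_prod sum_UNIV_bool)
qed

lemma card_legal_chains_le:
  "real (card (chains legal_layer legal_step (Suc n))) \<le> 31 * (31/2) ^ n"
proof -
  have "real (card (chains legal_layer legal_step (Suc n)))
      \<le> (\<Sum>x | legal_layer x. layer_weight x) / 51 * (31/2) ^ n"
    by (rule card_chains_le[OF layer_weight_contraction]) auto
  also have "(\<Sum>x | legal_layer x. layer_weight x) \<le> 31 * 51"
    by (simp add: sum_Collect_finite_UNIV sum_UNIV_prod sum_UNIV_bool)
  finally show ?thesis by (simp add: divide_right_mono)
qed

section \<open>Arithmetic progressions modulo p\<close>

definition ap :: "nat \<Rightarrow> int \<Rightarrow> int \<Rightarrow> int \<Rightarrow> nat" where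
  "ap p s d u = nat ((s + u * d) mod int p)"

lemma int_ap: "0 < p \<Longrightarrow> int (ap p s d u) = (s + u * d) mod int p"
  by (simp add: ap_def)

lemma ap_eqI: "s + u * d = t + v * e \<Longrightarrow> ap p s d u = ap p t e v"
  by (simp add: ap_def)

lemma ap_add_mod:
  assumes "0 < p"
  shows "(ap p s d u + ap p t d v) mod p = ap p (s + t) d (u + v)"
proof -
  have "int ((ap p s d u + ap p t d v) mod p) = ((s + u * d) mod int p + (t + v * d) mod int p) mod int p"
    using assms by (simp add: of_nat_mod int_ap)
  also have "\<dots> = int (ap p (s + t) d (u + v))"
    using assms by (simp add: int_ap mod_add_eq algebra_simps)
  finally show ?thesis by simp
qed

lemma add_ap_mod:
  assumes "0 < p"
  shows "(x + ap p s d u) mod p = ap p (int x + s) d u"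
proof -
  have "ap p (int x) d 0 = x mod p"
    by (simp add: ap_def nat_mod_distrib)
  then show ?thesis
    using ap_add_mod[OF assms, of "int x" d 0 s u] by (simp add: mod_add_left_eq)
qed

lemma ap_surj:
  assumes "0 < p" "coprime (int p) d" "q < p"
  shows "\<exists>j \<le> p div 2. q = ap p s d (int j) \<or> q = ap p s d (- int j)"
proof -
  obtain v where v: "[d * v = 1] (mod int p)"
    using assms(2) by (metis cong_solve_coprime_int coprime_commute)
  define u where "u = ((int q - s) * v) mod int p"
  have "[u = (int q - s) * v] (mod int p)"
    by (simp add: u_def)
  then have "[s + u * d = s + (int q - s) * v * d] (mod int p)"
    by (intro cong_add cong_mult cong_refl)
  also have "s + (int q - s) * v * d = s + (int q - s) * (d * v)"
    by (simp add: mult_ac)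
  also have "[s + (int q - s) * (d * v) = s + (int q - s) * 1] (mod int p)"
    by (intro cong_add cong_mult v cong_refl)
  finally have q: "q = ap p s d u"
    using assms(3) by (simp add: ap_def Cong.cong_def)
  have u: "0 \<le> u" "u < int p"
    using assms(1) by (simp_all add: u_def)
  show ?thesis
  proof (cases "u \<le> int (p div 2)")
    case True
    with q u show ?thesis
      by (intro exI[of _ "nat u"]) simp
  next
    case False
    have "ap p s d u = ap p s d (- (int p - u))"
      using mod_mult_self1[of "s + u * d" "- d" "int p"] by (simp add: ap_def algebra_simps)
    with q u False show ?thesis
      by (intro exI[of _ "nat (int p - u)"]) auto
  qed
qed

section \<open>Encoding triples by layers\<close>

type_synonym triple = "nat set \<times> nat set \<times> nat set"

fun layer_at :: "nat \<Rightarrow> int \<times> int \<times> int \<Rightarrow> int \<Rightarrow> triple \<Rightarrow> int \<Rightarrow> layer" where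
  "layer_at p (sA, sB, sC) d (A, B, C) u =
     (ap p sA d u \<in> A, ap p sB d u \<in> B, ap p sC d u \<in> C,
      ap p sA d (- u) \<in> A, ap p sB d (- u) \<in> B, ap p sC d (- u) \<in> C)"

definition encode :: "nat \<Rightarrow> int \<times> int \<times> int \<Rightarrow> int \<Rightarrow> triple \<Rightarrow> layer list" where
  "encode p s d X = map (\<lambda>j. layer_at p s d X (int j)) [0..<Suc (p div 2)]"

lemma subset_eq_if_ap_mem_iff:
  assumes "0 < p" "coprime (int p) d" "X \<subseteq> {0..<p}" "Y \<subseteq> {0..<p}"
    and "\<And>j. j \<le> p div 2 \<Longrightarrow>
           (ap p s d (int j) \<in> X \<longleftrightarrow> ap p s d (int j) \<in> Y) \<and>
           (ap p s d (- int j) \<in> X \<longleftrightarrow> ap p s d (- int j) \<in> Y)"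
  shows "X = Y"
proof -
  have "q \<in> X \<longleftrightarrow> q \<in> Y" if "q < p" for q
    using ap_surj[OF assms(1,2) that, of s] assms(5) by blast
  then show ?thesis
    using assms(3,4) by auto
qed

lemma inj_on_encode:
  assumes "0 < p" "coprime (int p) d"
  shows "inj_on (encode p s d) (Pow {0..<p} \<times> Pow {0..<p} \<times> Pow {0..<p})"
proof (rule inj_onI)
  fix X Y
  assume X: "X \<in> Pow {0..<p} \<times> Pow {0..<p} \<times> Pow {0..<p}" and Y: "Y \<in> Pow {0..<p} \<times> Pow {0..<p} \<times> Pow {0..<p}"
    and enc: "encode p s d X = encode p s d Y"
  obtain A B C A' B' C' where XY: "X = (A, B, C)" "Y = (A', B', C')"
    by (cases X, cases Y)
  obtain sA sB sC where s: "s = (sA, sB, sC)"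
    by (cases s)
  have sub: "A \<subseteq> {0..<p}" "A' \<subseteq> {0..<p}" "B \<subseteq> {0..<p}" "B' \<subseteq> {0..<p}" "C \<subseteq> {0..<p}" "C' \<subseteq> {0..<p}"
    using X Y by (simp_all add: XY)
  have "layer_at p s d X (int j) = layer_at p s d Y (int j)" if "j \<le> p div 2" for j
    using enc that unfolding encode_def map_eq_conv by (simp del: upt_Suc)
  note agree = this[unfolded XY s layer_at.simps prod.inject]
  have "A = A'" "B = B'" "C = C'"
    using subset_eq_if_ap_mem_iff[OF assms sub(1,2), of sA] subset_eq_if_ap_mem_iff[OF assms sub(3,4), of sB]
      subset_eq_if_ap_mem_iff[OF assms sub(5,6), of sC]
    by (simp_all add: agree)
  then show "X = Y"
    by (simp add: XY)
qed

(* sC - sB = a, sC - sA = b and sA + sB = c mod p make a + y, a' + y, x + b and x + y (with y at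
   the opposite position) hit the C-point or c, so each exclusion becomes one of the local
   constraints below. *)
locale progression_frame =
  fixes p :: nat and A B C :: "nat set" and a a' b c :: nat and sA sB sC d :: int
  assumes p_pos: "0 < p"
    and avoid: "\<And>x y. x \<in> A \<Longrightarrow> y \<in> B \<Longrightarrow> (x + y) mod p \<notin> C"
    and mem: "a \<in> A" "a' \<in> A" "b \<in> B" "c \<in> C"
    and shifts: "sC = int a + sB" "sC = int b + sA" "(sA + sB) mod int p = int c"
    and step: "d = int a' - int a"
begin

lemma not_C_and_B: "ap p sC d u \<in> C \<Longrightarrow> ap p sB d u \<notin> B"
  using avoid[OF mem(1), of "ap p sB d u"] add_ap_mod[OF p_pos, of a sB d u] shifts(1) by auto

lemma not_C_succ_and_B: "ap p sC d (u + 1) \<in> C \<Longrightarrow> ap p sB d u \<notin> B"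
proof -
  have "(a' + ap p sB d u) mod p = ap p sC d (u + 1)"
    by (simp add: add_ap_mod[OF p_pos] shifts(1) step algebra_simps ap_eqI)
  then show "ap p sC d (u + 1) \<in> C \<Longrightarrow> ap p sB d u \<notin> B"
    using avoid[OF mem(2)] by metis
qed

lemma not_C_and_A: "ap p sC d u \<in> C \<Longrightarrow> ap p sA d u \<notin> A"
proof -
  have "(ap p sA d u + b) mod p = ap p sC d u"
    by (simp add: add.commute add_ap_mod[OF p_pos] shifts(2))
  then show "ap p sC d u \<in> C \<Longrightarrow> ap p sA d u \<notin> A"
    using avoid[OF _ mem(3)] by metis
qed

lemma not_A_and_B_neg: "ap p sA d u \<in> A \<Longrightarrow> ap p sB d (- u) \<notin> B"
proof -
  have "(ap p sA d u + ap p sB d (- u)) mod p = c"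
    using ap_add_mod[OF p_pos, of sA d u sB "- u"] shifts(3) by (simp add: ap_def)
  then show "ap p sA d u \<in> A \<Longrightarrow> ap p sB d (- u) \<notin> B"
    using avoid mem(4) by metis
qed

lemma legal_layer_at: "legal_layer (layer_at p (sA, sB, sC) d (A, B, C) u)"
  using not_C_and_B[of u] not_C_and_B[of "- u"] not_C_and_A[of u] not_C_and_A[of "- u"]
    not_A_and_B_neg[of u] not_A_and_B_neg[of "- u"]
  by auto

lemma legal_step_layer_at:
  "legal_step (layer_at p (sA, sB, sC) d (A, B, C) u) (layer_at p (sA, sB, sC) d (A, B, C) (u + 1))"
  using not_C_succ_and_B[of u] not_C_succ_and_B[of "- (u + 1)"] by auto

lemma encode_in_chains:
  "encode p (sA, sB, sC) d (A, B, C) \<in> chains legal_layer legal_step (Suc (p div 2))"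
  unfolding encode_def chains_def
  by (simp add: list.pred_map successively_map list_all_iff legal_layer_at
      del: upt_Suc legal_layer.simps legal_step.simps layer_at.simps)
    (rule successively_upt, metis legal_step_layer_at of_nat_Suc add.commute)

end

lemma progression_shifts_exist:
  assumes "odd p" "c < p"
  shows "\<exists>sA sB sC. sC = int a + sB \<and> sC = int b + sA \<and> (sA + sB) mod int p = int c"
proof -
  \<comment> \<open>(p + 1) div 2 is the inverse of 2 modulo p\<close>
  define sB where "sB = (int c - int a + int b) * ((int p + 1) div 2)"
  have "2 * ((int p + 1) div 2) = int p + 1"
    using assms by (auto elim!: oddE)
  then have "(sB + int a - int b) + sB = int c + int p * (int c - int a + int b)"
    unfolding sB_def by (simp add: algebra_simps)
  then show ?thesis
    using assms(2) by (intro exI[of _ "sB + int a - int b"] exI[of _ sB] exI[of _ "int a + sB"]) simp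
qed

section \<open>Counting avoiding triples\<close>

definition avoiding_triples :: "nat \<Rightarrow> triple set" where
  "avoiding_triples p = {(A, B, C). A \<subseteq> {0..<p} \<and> B \<subseteq> {0..<p} \<and> C \<subseteq> {0..<p} \<and>
     (\<forall>x\<in>A. \<forall>y\<in>B. \<forall>z\<in>C. (x + y) mod p \<noteq> z)}"

lemma T_eq_card_avoiding_triples: "T p = card (avoiding_triples p)"
  by (simp add: T_def avoiding_triples_def)

lemma finite_avoiding_triples: "finite (avoiding_triples p)"
  by (rule finite_subset[of _ "Pow {0..<p} \<times> Pow {0..<p} \<times> Pow {0..<p}"])
    (auto simp: avoiding_triples_def)

lemma coprime_int_diff:
  assumes "prime p" "a < p" "a' < p" "a \<noteq> a'"
  shows "coprime (int p) (int a' - int a)"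
proof -
  have "\<not> int p dvd int a' - int a"
  proof
    assume "int p dvd int a' - int a"
    moreover have "int a' - int a \<noteq> 0"
      using assms(4) by simp
    ultimately have "\<bar>int p\<bar> \<le> \<bar>int a' - int a\<bar>"
      by (rule dvd_imp_le_int[rotated])
    then show False
      using assms(2,3) by simp
  qed
  then show ?thesis
    using assms(1) by (simp add: prime_imp_coprime)
qed

lemma card_avoiding_triples_through_le:
  assumes "prime p" "p \<noteq> 2" "a < p" "a' < p" "a \<noteq> a'" "c < p"
  shows "card {(A, B, C) \<in> avoiding_triples p. a \<in> A \<and> a' \<in> A \<and> b \<in> B \<and> c \<in> C}
           \<le> card (chains legal_layer legal_step (Suc (p div 2)))" (is "card ?S \<le> _")
proof -
  define d where "d = int a' - int a"
  have "0 < p"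
    using assms(1) by (simp add: prime_gt_0_nat)
  have "odd p"
    using assms(1,2) prime_ge_2_nat[OF assms(1)] by (intro prime_odd_nat) auto
  have coprime: "coprime (int p) d"
    unfolding d_def using assms(1,3-5) by (rule coprime_int_diff)
  obtain sA sB sC where shifts: "sC = int a + sB" "sC = int b + sA" "(sA + sB) mod int p = int c"
    using progression_shifts_exist[OF \<open>odd p\<close> assms(6), of a b] by blast
  show ?thesis
  proof (rule card_inj_on_le[OF _ _ finite_chains])
    show "inj_on (encode p (sA, sB, sC) d) ?S"
      by (rule inj_on_subset[OF inj_on_encode[OF \<open>0 < p\<close> coprime]]) (auto simp: avoiding_triples_def)
    show "encode p (sA, sB, sC) d ` ?S \<subseteq> chains legal_layer legal_step (Suc (p div 2))"
    proof clarify
      fix A B C assume "(A, B, C) \<in> avoiding_triples p" "a \<in> A" "a' \<in> A" "b \<in> B" "c \<in> C"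
      then have "progression_frame p A B C a a' b c sA sB sC d"
        using \<open>0 < p\<close> shifts by unfold_locales (force simp: avoiding_triples_def d_def)+
      then show "encode p (sA, sB, sC) d (A, B, C) \<in> chains legal_layer legal_step (Suc (p div 2))"
        by (rule progression_frame.encode_in_chains)
    qed
  qed
qed

lemma avoiding_triples_swap: "(A, B, C) \<in> avoiding_triples p \<Longrightarrow> (B, A, C) \<in> avoiding_triples p"
  unfolding avoiding_triples_def by (clarsimp, metis add.commute)

definition wide_avoiding_triples :: "nat \<Rightarrow> triple set" where
  "wide_avoiding_triples p = {(A, B, C) \<in> avoiding_triples p. 2 \<le> card A \<and> B \<noteq> {} \<and> C \<noteq> {}}"

lemma card_wide_avoiding_triples_le:
  assumes "prime p" "p \<noteq> 2"
  shows "card (wide_avoiding_triples p) \<le> p ^ 4 * card (chains legal_layer legal_step (Suc (p div 2)))"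
proof -
  define I where "I = {(a, a', b, c). a < p \<and> a' < p \<and> a \<noteq> a' \<and> b < p \<and> (c::nat) < p}"
  define S where "S = (\<lambda>(a, a', b, c). {(A, B, C) \<in> avoiding_triples p. a \<in> A \<and> a' \<in> A \<and> b \<in> B \<and> c \<in> C})"
  have I_sub: "I \<subseteq> {0..<p} \<times> {0..<p} \<times> {0..<p} \<times> {0..<p}"
    by (auto simp: I_def)
  then have "finite I" by (rule finite_subset) simp
  have "card I \<le> p ^ 4"
    using card_mono[OF _ I_sub] by (simp add: card_cartesian_product power4_eq_xxxx)
  have "wide_avoiding_triples p \<subseteq> (\<Union>i\<in>I. S i)"
  proof clarify
    fix A B C assume wide: "(A, B, C) \<in> wide_avoiding_triples p"
    then have sub: "A \<subseteq> {0..<p}" "B \<subseteq> {0..<p}" "C \<subseteq> {0..<p}"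
      by (auto simp: wide_avoiding_triples_def avoiding_triples_def)
    then have "\<not> card A \<le> Suc 0" "finite A"
      using wide finite_subset by (auto simp: wide_avoiding_triples_def)
    then obtain a a' where "a \<in> A" "a' \<in> A" "a \<noteq> a'"
      by (auto simp: card_le_Suc0_iff_eq)
    moreover obtain b c where "b \<in> B" "c \<in> C"
      using wide by (auto simp: wide_avoiding_triples_def)
    ultimately have "(a, a', b, c) \<in> I" "(A, B, C) \<in> S (a, a', b, c)"
      using wide sub by (auto simp: I_def S_def wide_avoiding_triples_def)
    then show "(A, B, C) \<in> (\<Union>i\<in>I. S i)"
      by blast
  qed
  then have "card (wide_avoiding_triples p) \<le> card (\<Union>i\<in>I. S i)"
    by (rule card_mono[rotated]) (auto simp: S_def intro: finite_subset[OF _ finite_avoiding_triples])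
  also have "\<dots> \<le> (\<Sum>i\<in>I. card (S i))"
    by (rule card_UN_le[OF \<open>finite I\<close>])
  also have "\<dots> \<le> card I * card (chains legal_layer legal_step (Suc (p div 2)))"
    using sum_bounded_above[of I "\<lambda>i. card (S i)"]
    by (force simp: I_def S_def intro!: card_avoiding_triples_through_le[OF assms])
  also have "\<dots> \<le> p ^ 4 * card (chains legal_layer legal_step (Suc (p div 2)))"
    using \<open>card I \<le> p ^ 4\<close> by simp
  finally show ?thesis .
qed

definition nonempty_avoiding_triples :: "nat \<Rightarrow> triple set" where
  "nonempty_avoiding_triples p = {(A, B, C) \<in> avoiding_triples p. A \<noteq> {} \<and> B \<noteq> {} \<and> C \<noteq> {}}"

definition singleton_pair_triples :: "nat \<Rightarrow> triple set" where
  "singleton_pair_triples p = (\<lambda>(a, b, C). ({a}, {b}, C)) ` ({0..<p} \<times> {0..<p} \<times> Pow {0..<p})"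

lemma nonempty_avoiding_triples_subset:
  "nonempty_avoiding_triples p
     \<subseteq> wide_avoiding_triples p \<union> (\<lambda>(A, B, C). (B, A, C)) ` wide_avoiding_triples p \<union>
       singleton_pair_triples p"
proof clarify
  fix A B C
  assume "(A, B, C) \<in> nonempty_avoiding_triples p" "(A, B, C) \<notin> singleton_pair_triples p"
    and not_swapped: "(A, B, C) \<notin> (\<lambda>(A, B, C). (B, A, C)) ` wide_avoiding_triples p"
  then have avoid: "(A, B, C) \<in> avoiding_triples p" "A \<noteq> {}" "B \<noteq> {}" "C \<noteq> {}"
    by (auto simp: nonempty_avoiding_triples_def)
  then have sub: "A \<subseteq> {0..<p}" "B \<subseteq> {0..<p}" "C \<subseteq> {0..<p}"
    by (auto simp: avoiding_triples_def)
  show "(A, B, C) \<in> wide_avoiding_triples p"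
  proof (rule ccontr)
    assume "(A, B, C) \<notin> wide_avoiding_triples p"
    moreover have "(B, A, C) \<notin> wide_avoiding_triples p"
      using not_swapped by (metis (no_types, lifting) case_prod_conv image_eqI)
    ultimately have "card A \<le> 1" "card B \<le> 1"
      using avoid avoiding_triples_swap[OF avoid(1)] by (auto simp: wide_avoiding_triples_def)
    then obtain a b where "A = {a}" "B = {b}"
      using avoid finite_subset[OF sub(1)] finite_subset[OF sub(2)]
      by (metis One_nat_def card_0_eq card_1_singletonE finite_atLeastLessThan le_SucE le_zero_eq)
    then have "(A, B, C) \<in> singleton_pair_triples p"
      using sub by (auto simp: singleton_pair_triples_def intro!: image_eqI[of _ _ "(a, b, C)"])
    with \<open>(A, B, C) \<notin> singleton_pair_triples p\<close> show False ..
  qed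
qed

lemma card_singleton_pair_triples_le: "card (singleton_pair_triples p) \<le> p ^ 2 * 2 ^ p"
  using card_image_le[of "{0..<p} \<times> {0..<p} \<times> Pow {0..<p}" "\<lambda>(a, b, C). ({a}, {b}, C)"]
  by (simp add: singleton_pair_triples_def card_cartesian_product card_Pow power2_eq_square)

lemma card_nonempty_avoiding_triples_le:
  assumes "prime p" "p \<noteq> 2"
  shows "card (nonempty_avoiding_triples p)
           \<le> 2 * p ^ 4 * card (chains legal_layer legal_step (Suc (p div 2))) + p ^ 2 * 2 ^ p"
proof -
  define W where "W = wide_avoiding_triples p"
  have "finite W"
    unfolding W_def wide_avoiding_triples_def by (rule finite_subset[OF _ finite_avoiding_triples]) auto
  have "card (nonempty_avoiding_triples p) \<le> card (W \<union> (\<lambda>(A, B, C). (B, A, C)) ` W \<union> singleton_pair_triples p)"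
    using nonempty_avoiding_triples_subset[of p] unfolding W_def[symmetric]
    by (rule card_mono[rotated]) (simp add: \<open>finite W\<close> singleton_pair_triples_def)
  also have "\<dots> \<le> card W + card ((\<lambda>(A, B, C). (B, A, C)) ` W) + card (singleton_pair_triples p)"
    by (meson card_Un_le add_le_mono le_trans order_refl)
  also have "\<dots> \<le> 2 * card W + p ^ 2 * 2 ^ p"
    using card_image_le[OF \<open>finite W\<close>, of "\<lambda>(A, B, C). (B, A, C)"] card_singleton_pair_triples_le[of p]
    by linarith
  finally show ?thesis
    using card_wide_avoiding_triples_le[OF assms] unfolding W_def by linarith
qed

lemma card_triples_with_empty:
  assumes "finite R"
  shows "real (card {(A, B, C). A \<subseteq> R \<and> B \<subseteq> R \<and> C \<subseteq> R \<and> (A = {} \<or> B = {} \<or> C = {})})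
           = 3 * 4 ^ card R - 3 * 2 ^ card R + 1"
proof -
  define P where "P = Pow R"
  define Q where "Q = (P - {{}}) \<times> (P - {{}}) \<times> (P - {{}})"
  have "finite P" "card P = 2 ^ card R"
    using assms by (simp_all add: P_def card_Pow)
  have "{(A, B, C). A \<subseteq> R \<and> B \<subseteq> R \<and> C \<subseteq> R \<and> (A = {} \<or> B = {} \<or> C = {})} = P \<times> P \<times> P - Q"
    by (auto simp: P_def Q_def)
  moreover have "Q \<subseteq> P \<times> P \<times> P" "finite (P \<times> P \<times> P)"
    by (auto simp: Q_def \<open>finite P\<close>)
  then have "card (P \<times> P \<times> P - Q) + card Q = card (P \<times> P \<times> P)"
    by (metis card_Diff_subset card_mono finite_subset le_add_diff_inverse2)
  then have "real (card (P \<times> P \<times> P - Q)) + real (card Q) = real (card (P \<times> P \<times> P))"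
    by (metis of_nat_add)
  moreover have "real (card (P - {{}})) = 2 ^ card R - 1"
    using \<open>finite P\<close> \<open>card P = 2 ^ card R\<close> by (simp add: P_def of_nat_diff)
  moreover have "(4::real) ^ card R = 2 ^ card R * 2 ^ card R"
    by (simp add: power_mult_distrib[symmetric])
  ultimately show ?thesis
    by (simp add: Q_def card_cartesian_product \<open>card P = 2 ^ card R\<close> algebra_simps)
qed

lemma real_T_eq:
  "real (T p) = 3 * 4 ^ p - 3 * 2 ^ p + 1 + real (card (nonempty_avoiding_triples p))"
proof -
  define E where "E = {(A, B, C). A \<subseteq> {0..<p} \<and> B \<subseteq> {0..<p} \<and> C \<subseteq> {0..<p} \<and> (A = {} \<or> B = {} \<or> C = {})}"
  have "finite E" "finite (nonempty_avoiding_triples p)"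
    by (auto simp: E_def nonempty_avoiding_triples_def intro: finite_subset[OF _ finite_avoiding_triples]
        finite_subset[of _ "Pow {0..<p} \<times> Pow {0..<p} \<times> Pow {0..<p}"])
  moreover have "E \<inter> nonempty_avoiding_triples p = {}"
    by (auto simp: E_def nonempty_avoiding_triples_def)
  moreover have "avoiding_triples p = E \<union> nonempty_avoiding_triples p"
    by (auto simp: avoiding_triples_def nonempty_avoiding_triples_def E_def)
  ultimately have "T p = card E + card (nonempty_avoiding_triples p)"
    by (simp add: T_eq_card_avoiding_triples card_Un_disjoint)
  then show ?thesis
    using card_triples_with_empty[of "{0..<p}"] by (simp add: E_def)
qed

lemma card_legal_chains_half_le:
  "real (card (chains legal_layer legal_step (Suc (p div 2)))) \<le> 31 * (63/16) ^ p"
proof -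
  have "(31/2 :: real) ^ (p div 2) \<le> ((63/16) ^ 2) ^ (p div 2)"
    by (rule power_mono) (auto simp: power2_eq_square)
  also have "\<dots> = (63/16) ^ (2 * (p div 2))"
    by (simp add: power_mult)
  also have "\<dots> \<le> (63/16) ^ p"
    by (rule power_increasing) auto
  finally show ?thesis
    using card_legal_chains_le[of "p div 2"] by linarith
qed

lemma T_deviation_le:
  assumes "prime p" "p \<noteq> 2"
  shows "\<bar>real (T p) - 3 * 4 ^ p\<bar> \<le> 3 * 2 ^ p + real p ^ 2 * 2 ^ p + 62 * (real p ^ 4 * (63/16) ^ p)"
proof -
  define L where "L = card (chains legal_layer legal_step (Suc (p div 2)))"
  have "real (card (nonempty_avoiding_triples p)) \<le> real (2 * p ^ 4 * L + p ^ 2 * 2 ^ p)"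
    using card_nonempty_avoiding_triples_le[OF assms] unfolding L_def by (rule of_nat_mono)
  also have "\<dots> = 2 * real p ^ 4 * real L + real p ^ 2 * 2 ^ p"
    by simp
  also have "\<dots> \<le> 2 * real p ^ 4 * (31 * (63/16) ^ p) + real p ^ 2 * 2 ^ p"
    unfolding L_def by (intro add_right_mono mult_left_mono card_legal_chains_half_le) simp
  finally have "real (card (nonempty_avoiding_triples p)) \<le> 62 * (real p ^ 4 * (63/16) ^ p) + real p ^ 2 * 2 ^ p"
    by simp
  moreover have "(1::real) \<le> 2 ^ p"
    by simp
  ultimately show ?thesis
    unfolding real_T_eq abs_le_iff by linarith
qed

theorem theorem4:
  shows "\<exists>(c::real) (K::real) (p0::nat). c > 0 \<and> K > 0 \<and>
           (\<forall>p. prime p \<and> p \<ge> p0 \<longrightarrow>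
              \<bar>real (T p) - 3 * 4 ^ p\<bar> \<le> K * (4 - c) ^ p)"
proof -
  have "eventually (\<lambda>n. real n ^ 4 * (63/16) ^ n \<le> (127/32 :: real) ^ n) at_top"
    "eventually (\<lambda>n. real n ^ 2 * 2 ^ n \<le> (127/32 :: real) ^ n) at_top"
    by real_asymp+
  then have "eventually (\<lambda>n. real n ^ 4 * (63/16) ^ n \<le> (127/32 :: real) ^ n \<and>
      real n ^ 2 * 2 ^ n \<le> (127/32 :: real) ^ n) at_top"
    by (rule eventually_conj)
  then obtain p1 where p1: "\<And>n. n \<ge> p1 \<Longrightarrow>
      real n ^ 4 * (63/16) ^ n \<le> (127/32) ^ n \<and> real n ^ 2 * 2 ^ n \<le> (127/32 :: real) ^ n"
    unfolding eventually_at_top_linorder by blast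
  have "\<bar>real (T p) - 3 * 4 ^ p\<bar> \<le> 66 * (127/32) ^ p" if "prime p" "p \<ge> max p1 3" for p
  proof -
    have "(2::real) ^ p \<le> (127/32) ^ p"
      by (rule power_mono) auto
    moreover have "\<bar>real (T p) - 3 * 4 ^ p\<bar> \<le> 3 * 2 ^ p + real p ^ 2 * 2 ^ p + 62 * (real p ^ 4 * (63/16) ^ p)"
      using that by (intro T_deviation_le) auto
    ultimately show ?thesis
      using p1[of p] that by linarith
  qed
  then show ?thesis
    by (intro exI[of _ "1/32"] exI[of _ 66] exI[of _ "max p1 3"]) auto
qed

end
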